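(* Let $\lambda_1\ge\lambda_2\ge\lambda_3\ge\lambda_4\ge0$ with $\sum_i\lambda_i=1$, and let $$\rho_{\vec\lambda}=\lambda_1\Phi_1+\lambda_2|01\rangle\langle01|+\lambda_3\Phi_2+\lambda_4|10\rangle\langle10|,\qquad \sigma_{\vec\lambda}=\sum_{j=1}^4\lambda_j\Phi_j.$$ Suppose $\vec\lambda=(\lambda_1,\lambda_2,\lambda_3,\lambda_4)$ lies in one of the regions $A=\{2\lambda_2+\lambda_3-\lambda_1<0,\ 2\lambda_3+\lambda_4-\lambda_2<0\}$, $B=\{2\lambda_2+\lambda_3-\lambda_1<0,\ 2\lambda_3+\lambda_4-\lambda_2\ge0,\ \lambda_3\le2\lambda_4,\ \lambda_2>\lambda_3+\lambda_4\}$, $C=\{2\lambda_2+\lambda_3-\lambda_1<0,\ 2\lambda_3+\lambda_4-\lambda_2\ge0,\ \lambda_3>2\lambda_4,\ \lambda_2>\tfrac32\lambda_3\}$. Then there exists no non-entangling map $\Lambda:\mathcal{D}\to\mathcal{D}$ such that $\Lambda(\rho_{\vec\lambda})=\sigma_{\vec\lambda}$.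
   Context: $\mathcal{D}$ is the set of two-qubit density matrices on $\mathbb{C}^2\otimes\mathbb{C}^2$ (Hermitian, positive semidefinite, trace one $4\times4$ matrices), written in the computational basis $\{|ij\rangle\}_{i,j\in\{0,1\}}$. The Bell vectors are $|\Phi_1\rangle=\frac{1}{\sqrt2}(|00\rangle+|11\rangle)$, $|\Phi_2\rangle=\frac{1}{\sqrt2}(|00\rangle-|11\rangle)$, $|\Phi_3\rangle=\frac{1}{\sqrt2}(|10\rangle+|01\rangle)$, $|\Phi_4\rangle=\frac{1}{\sqrt2}(|10\rangle-|01\rangle)$, and $\Phi_i=|\Phi_i\rangle\langle\Phi_i|$. A state is separable if it is a convex combination of product states $|\phi\rangle\langle\phi|\otimes|\chi\rangle\langle\chi|$. A map $\Lambda:\mathcal{D}\to\mathcal{D}$ is non-entangling (NE) if it is completely positive and trace preserving and maps every separable state to a separable state. *)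

theory Defs
  imports Complex_Main "Jordan_Normal_Form.Matrix"
begin

text \<open>The computational basis vector |ij> of C^2 (x) C^2 has index 2*i+j,
  i.e. |00>,|01>,|10>,|11> are indices 0,1,2,3. Vectors are functions nat => complex,
  only the first n entries being relevant.\<close>

definition mtrace :: "nat \<Rightarrow> complex mat \<Rightarrow> complex" where
  "mtrace n A = (\<Sum>i<n. A $$ (i, i))"

definition psd :: "nat \<Rightarrow> complex mat \<Rightarrow> bool" where
  "psd n A \<longleftrightarrow> A \<in> carrier_mat n n \<and>
     (\<forall>v :: nat \<Rightarrow> complex.
        let q = (\<Sum>i<n. \<Sum>j<n. cnj (v i) * A $$ (i, j) * v j) in Im q = 0 \<and> Re q \<ge> 0)"

text \<open>Hermitian (implied by psd over C, stated for fidelity with the definition of states).\<close>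
definition hermitian :: "nat \<Rightarrow> complex mat \<Rightarrow> bool" where
  "hermitian n A \<longleftrightarrow> A \<in> carrier_mat n n \<and> (\<forall>i<n. \<forall>j<n. A $$ (i, j) = cnj (A $$ (j, i)))"

definition density2 :: "complex mat \<Rightarrow> bool" where
  "density2 \<rho> \<longleftrightarrow> hermitian 4 \<rho> \<and> psd 4 \<rho> \<and> mtrace 4 \<rho> = 1"

definition proj :: "nat \<Rightarrow> (nat \<Rightarrow> complex) \<Rightarrow> complex mat" where
  "proj n v = mat n n (\<lambda>(i, j). v i * cnj (v j))"

definition unit_vec2 :: "(nat \<Rightarrow> complex) \<Rightarrow> bool" where
  "unit_vec2 v \<longleftrightarrow> (\<Sum>i<2. cmod (v i) ^ 2) = 1"

definition tensor2 :: "(nat \<Rightarrow> complex) \<Rightarrow> (nat \<Rightarrow> complex) \<Rightarrow> nat \<Rightarrow> complex" where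
  "tensor2 \<phi> \<chi> = (\<lambda>k. \<phi> (k div 2) * \<chi> (k mod 2))"

text \<open>Separable: finite convex combination of product pure states
  |phi><phi| (x) |chi><chi| = |phi (x) chi><phi (x) chi|.\<close>
definition separable2 :: "complex mat \<Rightarrow> bool" where
  "separable2 \<rho> \<longleftrightarrow> (\<exists>(m::nat) (p :: nat \<Rightarrow> real) \<phi> \<chi>.
      (\<forall>k<m. p k \<ge> 0 \<and> unit_vec2 (\<phi> k) \<and> unit_vec2 (\<chi> k)) \<and> (\<Sum>k<m. p k) = 1 \<and>
      \<rho> = mat 4 4 (\<lambda>(i, j). \<Sum>k<m. complex_of_real (p k) * proj 4 (tensor2 (\<phi> k) (\<chi> k)) $$ (i, j)))"

text \<open>Ampliation id_k (x) Lambda acting on a (4k) x (4k) matrix viewed as a k x k block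
  matrix with 4 x 4 blocks.\<close>
definition block4 :: "complex mat \<Rightarrow> nat \<Rightarrow> nat \<Rightarrow> complex mat" where
  "block4 X a b = mat 4 4 (\<lambda>(i, j). X $$ (4 * a + i, 4 * b + j))"

definition ampl :: "nat \<Rightarrow> (complex mat \<Rightarrow> complex mat) \<Rightarrow> complex mat \<Rightarrow> complex mat" where
  "ampl k \<Lambda> X = mat (4 * k) (4 * k)
     (\<lambda>(r, c). \<Lambda> (block4 X (r div 4) (c div 4)) $$ (r mod 4, c mod 4))"

definition linear_map4 :: "(complex mat \<Rightarrow> complex mat) \<Rightarrow> bool" where
  "linear_map4 \<Lambda> \<longleftrightarrow>
     (\<forall>A \<in> carrier_mat 4 4. \<Lambda> A \<in> carrier_mat 4 4) \<and>
     (\<forall>A \<in> carrier_mat 4 4. \<forall>B \<in> carrier_mat 4 4. \<Lambda> (A + B) = \<Lambda> A + \<Lambda> B) \<and>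
     (\<forall>A \<in> carrier_mat 4 4. \<forall>c :: complex. \<Lambda> (c \<cdot>\<^sub>m A) = c \<cdot>\<^sub>m \<Lambda> A)"

definition completely_positive4 :: "(complex mat \<Rightarrow> complex mat) \<Rightarrow> bool" where
  "completely_positive4 \<Lambda> \<longleftrightarrow> (\<forall>k X. psd (4 * k) X \<longrightarrow> psd (4 * k) (ampl k \<Lambda> X))"

definition trace_preserving4 :: "(complex mat \<Rightarrow> complex mat) \<Rightarrow> bool" where
  "trace_preserving4 \<Lambda> \<longleftrightarrow> (\<forall>A \<in> carrier_mat 4 4. mtrace 4 (\<Lambda> A) = mtrace 4 A)"

definition non_entangling :: "(complex mat \<Rightarrow> complex mat) \<Rightarrow> bool" where
  "non_entangling \<Lambda> \<longleftrightarrow> linear_map4 \<Lambda> \<and> completely_positive4 \<Lambda> \<and> trace_preserving4 \<Lambda> \<and>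
     (\<forall>\<rho>. density2 \<rho> \<longrightarrow> density2 (\<Lambda> \<rho>)) \<and>
     (\<forall>\<rho>. separable2 \<rho> \<longrightarrow> separable2 (\<Lambda> \<rho>))"

definition ket :: "nat \<Rightarrow> nat \<Rightarrow> complex" where
  "ket a = (\<lambda>k. if k = a then 1 else 0)"

definition bell :: "nat \<Rightarrow> nat \<Rightarrow> complex" where
  "bell n = (\<lambda>k. complex_of_real (1 / sqrt 2) *
     (if n = 1 then ket 0 k + ket 3 k
      else if n = 2 then ket 0 k - ket 3 k
      else if n = 3 then ket 2 k + ket 1 k
      else ket 2 k - ket 1 k))"

definition Bell :: "nat \<Rightarrow> complex mat" where
  "Bell n = proj 4 (bell n)"

definition rho_lam :: "real \<Rightarrow> real \<Rightarrow> real \<Rightarrow> real \<Rightarrow> complex mat" where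
  "rho_lam l1 l2 l3 l4 =
     complex_of_real l1 \<cdot>\<^sub>m Bell 1 + complex_of_real l2 \<cdot>\<^sub>m proj 4 (ket 1)
     + complex_of_real l3 \<cdot>\<^sub>m Bell 2 + complex_of_real l4 \<cdot>\<^sub>m proj 4 (ket 2)"

definition sigma_lam :: "real \<Rightarrow> real \<Rightarrow> real \<Rightarrow> real \<Rightarrow> complex mat" where
  "sigma_lam l1 l2 l3 l4 =
     complex_of_real l1 \<cdot>\<^sub>m Bell 1 + complex_of_real l2 \<cdot>\<^sub>m Bell 2
     + complex_of_real l3 \<cdot>\<^sub>m Bell 3 + complex_of_real l4 \<cdot>\<^sub>m Bell 4"

end

(*
  A product vector has overlap at most 1/sqrt 2 with every Bell vector, so every separable state
  has fidelity at most 1/2 with each Bell state. A non-entangling map L therefore sends |01>, |10>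
  and the separable mixtures (Phi_1 + Phi_2)/2 and Phi_k/2 + (|01><01| + |10><10|)/4 (k = 1, 2)
  to states with Bell fidelities at most 1/2, while L(Phi_1) is a state. By linearity,
  L(rho) = sigma becomes two linear balance equations between these fidelities, since sigma has
  Phi_1- and Phi_2-fidelities lambda_1 and lambda_2. When lambda_1 > 2 lambda_2 + lambda_3 the
  first one forces L(Phi_1) to have Phi_1-fidelity 1, hence Phi_2-fidelity 0; the second one then
  has no solution once lambda_2 > lambda_3 + lambda_4 and 2 lambda_2 > 3 lambda_3, which holds
  throughout A, B and C.
*)
theory Submission
  imports Defs
begin

definition quad_form :: "nat \<Rightarrow> (nat \<Rightarrow> complex) \<Rightarrow> complex mat \<Rightarrow> complex" where
  "quad_form n v A = (\<Sum>i<n. \<Sum>j<n. cnj (v i) * A $$ (i, j) * v j)"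

lemma psd_quad_form:
  "psd n A \<Longrightarrow> Im (quad_form n v A) = 0 \<and> 0 \<le> Re (quad_form n v A)"
  unfolding psd_def quad_form_def Let_def by blast

lemma quad_form_add:
  "A \<in> carrier_mat n n \<Longrightarrow> B \<in> carrier_mat n n \<Longrightarrow>
   quad_form n v (A + B) = quad_form n v A + quad_form n v B"
  unfolding quad_form_def by (simp add: algebra_simps sum.distrib)

lemma quad_form_smult:
  "A \<in> carrier_mat n n \<Longrightarrow> quad_form n v (c \<cdot>\<^sub>m A) = c * quad_form n v A"
  unfolding quad_form_def by (simp add: algebra_simps sum_distrib_left)

lemma quad_form_proj:
  "quad_form n v (proj n w) = of_real (cmod (\<Sum>i<n. cnj (v i) * w i) ^ 2)"
proof -
  have "quad_form n v (proj n w) = (\<Sum>i<n. cnj (v i) * w i) * (\<Sum>j<n. v j * cnj (w j))"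
    unfolding quad_form_def proj_def sum_product by (simp add: ac_simps)
  also have "\<dots> = (\<Sum>i<n. cnj (v i) * w i) * cnj (\<Sum>i<n. cnj (v i) * w i)"
    by simp
  finally show ?thesis
    by (simp only: complex_norm_square)
qed

lemma quad_form_mixture:
  "quad_form n v (mat n n (\<lambda>(i, j). \<Sum>k<m. c k * proj n (w k) $$ (i, j)))
   = (\<Sum>k<m. c k * quad_form n v (proj n (w k)))"
  unfolding quad_form_def
  by (simp add: sum_distrib_left sum_distrib_right algebra_simps sum.swap[of _ "{..<m}"])

lemma proj_carrier [simp]: "proj n v \<in> carrier_mat n n"
  by (simp add: proj_def)

lemma Bell_carrier [simp]: "Bell k \<in> carrier_mat 4 4"
  by (simp add: Bell_def)

lemma hermitian_proj: "hermitian n (proj n v)"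
  unfolding hermitian_def proj_def by simp

lemma psd_proj: "psd n (proj n v)"
  unfolding psd_def Let_def using quad_form_proj[of n _ v]
  by (simp add: quad_form_def)

lemma mtrace_proj: "mtrace n (proj n v) = of_real (\<Sum>i<n. cmod (v i) ^ 2)"
  unfolding of_real_sum complex_norm_square by (simp add: mtrace_def proj_def)

lemma density2_proj: "(\<Sum>i<4. cmod (v i) ^ 2) = 1 \<Longrightarrow> density2 (proj 4 v)"
  unfolding density2_def by (simp add: hermitian_proj psd_proj mtrace_proj)

lemma sum_lessThan_2: "(\<Sum>i<2. f i) = f 0 + f (1::nat)"
  by (simp add: eval_nat_numeral)

lemma sum_lessThan_4: "(\<Sum>i<4. f i) = f 0 + f 1 + f 2 + f (3::nat)"
  by (simp add: eval_nat_numeral add.assoc)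

lemma less_4_cases: "(i::nat) < 4 \<Longrightarrow> i = 0 \<or> i = 1 \<or> i = 2 \<or> i = 3"
  by auto

lemma of_real_inv_sqrt2_sq: "complex_of_real (1 / sqrt 2) * complex_of_real (1 / sqrt 2) = 1 / 2"
  by (simp flip: of_real_mult)

lemma of_real_sqrt2_sq: "complex_of_real (sqrt 2) * complex_of_real (sqrt 2) = 2"
  by (simp flip: of_real_mult)

lemma cnj_bell [simp]: "cnj (bell k i) = bell k i"
  by (simp add: bell_def ket_def)

lemma bell_inner:
  assumes "j \<in> {1..4}" "k \<in> {1..4}"
  shows "(\<Sum>i<4. bell k i * bell j i) = (if k = j then 1 else 0)"
  using assms unfolding sum_lessThan_4
  by (auto simp: bell_def ket_def algebra_simps of_real_inv_sqrt2_sq of_real_sqrt2_sq)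

lemma density2_Bell:
  assumes k: "k \<in> {1..4}"
  shows "density2 (Bell k)"
proof -
  have "complex_of_real (\<Sum>i<4. cmod (bell k i) ^ 2) = (\<Sum>i<4. bell k i * bell k i)"
    unfolding of_real_sum complex_norm_square by simp
  also have "\<dots> = 1"
    using bell_inner[OF k k] by simp
  finally show ?thesis
    unfolding Bell_def by (intro density2_proj) (simp only: of_real_eq_1_iff)
qed

definition bell_fidelity :: "nat \<Rightarrow> complex mat \<Rightarrow> real" where
  "bell_fidelity k A = Re (quad_form 4 (bell k) A)"

lemma bell_fidelity_add:
  "A \<in> carrier_mat 4 4 \<Longrightarrow> B \<in> carrier_mat 4 4 \<Longrightarrow>
   bell_fidelity k (A + B) = bell_fidelity k A + bell_fidelity k B"
  by (simp add: bell_fidelity_def quad_form_add)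

lemma bell_fidelity_smult:
  "A \<in> carrier_mat 4 4 \<Longrightarrow> Im c = 0 \<Longrightarrow> bell_fidelity k (c \<cdot>\<^sub>m A) = Re c * bell_fidelity k A"
  by (simp add: bell_fidelity_def quad_form_smult)

lemma bell_fidelity_nonneg: "psd 4 A \<Longrightarrow> 0 \<le> bell_fidelity k A"
  by (simp add: bell_fidelity_def psd_quad_form)

lemma bell_fidelity_Bell:
  "j \<in> {1..4} \<Longrightarrow> k \<in> {1..4} \<Longrightarrow> bell_fidelity k (Bell j) = (if k = j then 1 else 0)"
  by (simp add: bell_fidelity_def Bell_def quad_form_proj bell_inner)

lemma bell_fidelity_sigma_lam:
  "bell_fidelity 1 (sigma_lam l1 l2 l3 l4) = l1" "bell_fidelity 2 (sigma_lam l1 l2 l3 l4) = l2"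
  by (simp_all add: sigma_lam_def bell_fidelity_add bell_fidelity_smult bell_fidelity_Bell)

lemma sum_bell_fidelity:
  "bell_fidelity 1 A + bell_fidelity 2 A + bell_fidelity 3 A + bell_fidelity 4 A = Re (mtrace 4 A)"
  by (simp add: bell_fidelity_def quad_form_def mtrace_def sum_lessThan_4
      bell_def ket_def algebra_simps of_real_inv_sqrt2_sq of_real_sqrt2_sq)

lemma density2_bell_fidelity_nonneg: "density2 A \<Longrightarrow> 0 \<le> bell_fidelity k A"
  by (simp add: density2_def bell_fidelity_nonneg)

lemma density2_bell_fidelity_12_le:
  assumes A: "density2 A"
  shows "bell_fidelity 1 A + bell_fidelity 2 A \<le> 1"
proof -
  have "bell_fidelity 1 A + bell_fidelity 2 A + bell_fidelity 3 A + bell_fidelity 4 A = 1"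
    using A sum_bell_fidelity[of A] by (simp add: density2_def)
  moreover have "0 \<le> bell_fidelity 3 A" "0 \<le> bell_fidelity 4 A"
    using A by (simp_all add: density2_bell_fidelity_nonneg)
  ultimately show ?thesis
    by linarith
qed

lemma cmod_mult_add_mult_sq_le:
  "cmod (a * c + b * d) ^ 2 \<le> (cmod a ^ 2 + cmod b ^ 2) * (cmod c ^ 2 + cmod d ^ 2)"
proof -
  have "cmod (a * c + b * d) \<le> cmod a * cmod c + cmod b * cmod d"
    by (metis norm_mult norm_triangle_ineq)
  then have "cmod (a * c + b * d) ^ 2 \<le> (cmod a * cmod c + cmod b * cmod d) ^ 2"
    by (simp add: power_mono)
  also have "\<dots> \<le> (cmod a ^ 2 + cmod b ^ 2) * (cmod c ^ 2 + cmod d ^ 2)"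
    using zero_le_power2[of "cmod a * cmod d - cmod b * cmod c"]
    by (simp add: power2_eq_square algebra_simps)
  finally show ?thesis .
qed

lemma bell_overlap_product:
  "\<exists>a b c d. (\<Sum>i<4. bell k i * tensor2 \<phi> \<chi> i) = complex_of_real (1 / sqrt 2) * (a * c + b * d)
    \<and> cmod a ^ 2 + cmod b ^ 2 = cmod (\<phi> 0) ^ 2 + cmod (\<phi> 1) ^ 2
    \<and> cmod c ^ 2 + cmod d ^ 2 = cmod (\<chi> 0) ^ 2 + cmod (\<chi> 1) ^ 2"
proof -
  consider "k = 1" | "k = 2" | "k = 3" | "k \<notin> {1, 2, 3}"
    by blast
  then show ?thesis
  proof cases
    case 1
    then show ?thesis
      by (intro exI[of _ "\<phi> 0"] exI[of _ "\<phi> 1"] exI[of _ "\<chi> 0"] exI[of _ "\<chi> 1"])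
        (simp add: sum_lessThan_4 bell_def ket_def tensor2_def algebra_simps)
  next
    case 2
    then show ?thesis
      by (intro exI[of _ "\<phi> 0"] exI[of _ "- \<phi> 1"] exI[of _ "\<chi> 0"] exI[of _ "\<chi> 1"])
        (simp add: sum_lessThan_4 bell_def ket_def tensor2_def algebra_simps)
  next
    case 3
    then show ?thesis
      by (intro exI[of _ "\<phi> 1"] exI[of _ "\<phi> 0"] exI[of _ "\<chi> 0"] exI[of _ "\<chi> 1"])
        (simp add: sum_lessThan_4 bell_def ket_def tensor2_def algebra_simps)
  next
    case 4
    then show ?thesis
      by (intro exI[of _ "\<phi> 1"] exI[of _ "- \<phi> 0"] exI[of _ "\<chi> 0"] exI[of _ "\<chi> 1"])
        (simp add: sum_lessThan_4 bell_def ket_def tensor2_def algebra_simps)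
  qed
qed

lemma bell_overlap_product_le:
  assumes "unit_vec2 \<phi>" "unit_vec2 \<chi>"
  shows "cmod (\<Sum>i<4. bell k i * tensor2 \<phi> \<chi> i) ^ 2 \<le> 1 / 2"
proof -
  obtain a b c d where
    overlap: "(\<Sum>i<4. bell k i * tensor2 \<phi> \<chi> i) = complex_of_real (1 / sqrt 2) * (a * c + b * d)"
    and ab: "cmod a ^ 2 + cmod b ^ 2 = 1" and cd: "cmod c ^ 2 + cmod d ^ 2 = 1"
    using bell_overlap_product[of k \<phi> \<chi>] assms by (auto simp: unit_vec2_def sum_lessThan_2)
  have "cmod (\<Sum>i<4. bell k i * tensor2 \<phi> \<chi> i) ^ 2 = cmod (a * c + b * d) ^ 2 / 2"
    by (simp add: overlap norm_divide power_divide)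
  also have "\<dots> \<le> 1 / 2"
    using cmod_mult_add_mult_sq_le[of a c b d] ab cd by simp
  finally show ?thesis .
qed

lemma separable2_bell_fidelity:
  assumes "separable2 A"
  shows "0 \<le> bell_fidelity k A \<and> bell_fidelity k A \<le> 1 / 2"
proof -
  obtain m p \<phi> \<chi> where
    comps: "\<forall>n<(m::nat). p n \<ge> 0 \<and> unit_vec2 (\<phi> n) \<and> unit_vec2 (\<chi> n)" and p_sum: "(\<Sum>n<m. p n) = 1" and
    A: "A = mat 4 4 (\<lambda>(i, j). \<Sum>n<m. complex_of_real (p n) * proj 4 (tensor2 (\<phi> n) (\<chi> n)) $$ (i, j))"
    using assms unfolding separable2_def by blast
  define g where "g n = cmod (\<Sum>i<4. bell k i * tensor2 (\<phi> n) (\<chi> n) i) ^ 2" for n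
  have fidelity: "bell_fidelity k A = (\<Sum>n<m. p n * g n)"
    by (simp add: A bell_fidelity_def quad_form_mixture quad_form_proj g_def flip: of_real_mult of_real_sum)
  have "(\<Sum>n<m. p n * g n) \<le> (\<Sum>n<m. p n * (1 / 2))"
    using comps bell_overlap_product_le by (intro sum_mono mult_left_mono) (auto simp: g_def)
  also have "\<dots> = 1 / 2"
    by (simp only: p_sum flip: sum_distrib_right)
  moreover have "0 \<le> (\<Sum>n<m. p n * g n)"
    using comps by (intro sum_nonneg) (simp add: g_def)
  ultimately show ?thesis
    by (simp add: fidelity)
qed

lemma separable2I:
  fixes m :: nat and p :: "nat \<Rightarrow> real"
  assumes "\<forall>n<m. 0 \<le> p n \<and> unit_vec2 (\<phi> n) \<and> unit_vec2 (\<chi> n)" "(\<Sum>n<m. p n) = 1"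
    and "A \<in> carrier_mat 4 4"
    and "\<And>i j. i < 4 \<Longrightarrow> j < 4 \<Longrightarrow> A $$ (i, j) =
      (\<Sum>n<m. complex_of_real (p n) * (tensor2 (\<phi> n) (\<chi> n) i * cnj (tensor2 (\<phi> n) (\<chi> n) j)))"
  shows "separable2 A"
  unfolding separable2_def using assms
  by (intro exI[of _ m] exI[of _ p] exI[of _ \<phi>] exI[of _ \<chi>] conjI eq_matI) (simp_all add: proj_def)

lemma unit_vec2_ket: "a < 2 \<Longrightarrow> unit_vec2 (ket a)"
  by (auto simp: unit_vec2_def ket_def eval_nat_numeral)

lemma tensor2_ket: "b < 2 \<Longrightarrow> tensor2 (ket a) (ket b) = ket (2 * a + b)"
  by (auto simp: tensor2_def ket_def fun_eq_iff)

lemma separable2_product: "unit_vec2 \<phi> \<Longrightarrow> unit_vec2 \<chi> \<Longrightarrow> separable2 (proj 4 (tensor2 \<phi> \<chi>))"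
  by (rule separable2I[of 1 "\<lambda>_. 1" "\<lambda>_. \<phi>" "\<lambda>_. \<chi>"]) (simp_all add: proj_def)

lemma separable2_proj_ket: "c < 4 \<Longrightarrow> separable2 (proj 4 (ket c))"
  using separable2_product[OF unit_vec2_ket unit_vec2_ket, of "c div 2" "c mod 2"]
  by (simp add: tensor2_ket)

(* (Phi_1 + Phi_2)/2 = (|00><00| + |11><11|)/2 *)
lemma separable2_Bell_1_2_mixture:
  "separable2 (complex_of_real (1 / 2) \<cdot>\<^sub>m Bell 1 + complex_of_real (1 / 2) \<cdot>\<^sub>m Bell 2)"
proof (rule separable2I[of 2 "\<lambda>_. 1 / 2" ket ket])
  fix i j :: nat
  assume i: "i < 4" and j: "j < 4"
  show "(complex_of_real (1 / 2) \<cdot>\<^sub>m Bell 1 + complex_of_real (1 / 2) \<cdot>\<^sub>m Bell 2) $$ (i, j) =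
    (\<Sum>n<2. complex_of_real (1 / 2) * (tensor2 (ket n) (ket n) i * cnj (tensor2 (ket n) (ket n) j)))"
    using less_4_cases[OF i] less_4_cases[OF j]
    by (elim disjE) (simp_all add: Bell_def proj_def bell_def ket_def tensor2_def sum_lessThan_2
        algebra_simps of_real_inv_sqrt2_sq of_real_sqrt2_sq)
qed (auto simp: unit_vec2_ket)

definition qubit :: "complex \<Rightarrow> complex \<Rightarrow> nat \<Rightarrow> complex" where
  "qubit a b = (\<lambda>i. if i = 0 then a else if i = 1 then b else 0)"

lemma unit_vec2_qubit: "cmod a ^ 2 + cmod b ^ 2 = 1 \<Longrightarrow> unit_vec2 (qubit a b)"
  by (simp add: unit_vec2_def qubit_def sum_lessThan_2)

lemma tensor2_qubit:
  "i < 4 \<Longrightarrow> tensor2 (qubit a b) (qubit c d) i =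
    (if i = 0 then a * c else if i = 1 then a * d else if i = 2 then b * c else b * d)"
  using less_4_cases[of i] by (auto simp: tensor2_def qubit_def)

lemma index_Bell_mixed_01_10:
  assumes "k \<in> {1, 2}" "i < 4" "j < 4"
  shows "(complex_of_real (1 / 2) \<cdot>\<^sub>m Bell k + complex_of_real (1 / 4) \<cdot>\<^sub>m proj 4 (ket 1)
      + complex_of_real (1 / 4) \<cdot>\<^sub>m proj 4 (ket 2)) $$ (i, j) =
    (if i = j then 1 / 4 else if i + j = 3 \<and> i \<noteq> 1 \<and> j \<noteq> 1 then (if k = 1 then 1 else -1) / 4 else 0)"
proof -
  have "bell k i * bell k j = (if i = j \<and> (i = 0 \<or> i = 3) then 1 / 2
      else if i + j = 3 \<and> i \<noteq> 1 \<and> j \<noteq> 1 then (if k = 1 then 1 else -1) / 2 else 0)"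
    using assms less_4_cases[OF assms(2)] less_4_cases[OF assms(3)]
    by (elim disjE insertE) (simp_all add: bell_def ket_def of_real_inv_sqrt2_sq of_real_sqrt2_sq)
  then show ?thesis
    using assms(2,3) by (auto simp: Bell_def proj_def ket_def)
qed

(* Averaging the product states (|0> + i^n |1>) (x) (|0> + s (-i)^n |1>) / 2 over n = 0..3 kills
  every coherence except the one between |00> and |11>, whose sign s selects Phi_1 or Phi_2. *)
lemma separable2_Bell_mixed_01_10:
  assumes "k \<in> {1, 2}"
  shows "separable2 (complex_of_real (1 / 2) \<cdot>\<^sub>m Bell k
    + complex_of_real (1 / 4) \<cdot>\<^sub>m proj 4 (ket 1) + complex_of_real (1 / 4) \<cdot>\<^sub>m proj 4 (ket 2))"
proof -
  define c where "c = complex_of_real (1 / sqrt 2)"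
  define s :: complex where "s = (if k = 1 then 1 else -1)"
  define \<phi> where "\<phi> n = qubit c (c * \<i> ^ n)" for n :: nat
  define \<chi> where "\<chi> n = qubit c (c * s * (- \<i>) ^ n)" for n :: nat
  have c: "cmod c ^ 2 = 1 / 2" "cnj c = c" "c * c = 1 / 2"
    by (simp_all add: c_def norm_divide power_divide of_real_inv_sqrt2_sq of_real_sqrt2_sq)
  have s: "cmod s = 1" "cnj s = s" "s * s = 1" "s * (s * z) = z" for z
    by (simp_all add: s_def)
  have tensor: "tensor2 (\<phi> n) (\<chi> n) i = (if i = 0 then 1 / 2 else if i = 1 then s * (- \<i>) ^ n / 2
      else if i = 2 then \<i> ^ n / 2 else s / 2)" if "i < 4" for i n
  proof -
    have "\<i> ^ n * (- \<i>) ^ n = 1"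
      by (simp flip: power_mult_distrib)
    then show ?thesis
      using c unfolding \<phi>_def \<chi>_def tensor2_qubit[OF that] by (simp add: algebra_simps)
  qed
  have i3: "\<i> ^ 3 = - \<i>"
    by (simp add: power3_eq_cube)
  show ?thesis
  proof (rule separable2I[of 4 "\<lambda>_. 1 / 4" \<phi> \<chi>])
    show "\<forall>n<4. 0 \<le> (1 / 4 :: real) \<and> unit_vec2 (\<phi> n) \<and> unit_vec2 (\<chi> n)"
      using c s by (auto simp: \<phi>_def \<chi>_def intro!: unit_vec2_qubit simp: norm_mult norm_power)
  next
    fix i j :: nat
    assume i: "i < 4" and j: "j < 4"
    then show "(complex_of_real (1 / 2) \<cdot>\<^sub>m Bell k + complex_of_real (1 / 4) \<cdot>\<^sub>m proj 4 (ket 1)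
        + complex_of_real (1 / 4) \<cdot>\<^sub>m proj 4 (ket 2)) $$ (i, j) =
      (\<Sum>n<4. complex_of_real (1 / 4) * (tensor2 (\<phi> n) (\<chi> n) i * cnj (tensor2 (\<phi> n) (\<chi> n) j)))"
      unfolding index_Bell_mixed_01_10[OF assms i j] tensor[OF i] tensor[OF j] sum_lessThan_4
        s_def[symmetric]
      using less_4_cases[OF i] less_4_cases[OF j] s
      by (elim disjE) (simp_all add: algebra_simps i3)
  qed simp_all
qed

lemma linear_map4_add:
  "linear_map4 L \<Longrightarrow> A \<in> carrier_mat 4 4 \<Longrightarrow> B \<in> carrier_mat 4 4 \<Longrightarrow> L (A + B) = L A + L B"
  by (simp add: linear_map4_def)

lemma linear_map4_smult: "linear_map4 L \<Longrightarrow> A \<in> carrier_mat 4 4 \<Longrightarrow> L (c \<cdot>\<^sub>m A) = c \<cdot>\<^sub>m L A"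
  by (simp add: linear_map4_def)

lemma linear_map4_carrier: "linear_map4 L \<Longrightarrow> A \<in> carrier_mat 4 4 \<Longrightarrow> L A \<in> carrier_mat 4 4"
  by (simp add: linear_map4_def)

lemmas linear_map4_bell_fidelity_simps =
  linear_map4_add linear_map4_smult linear_map4_carrier bell_fidelity_add bell_fidelity_smult

lemma bell_fidelity_image_rho_lam:
  assumes "linear_map4 L"
  shows "bell_fidelity k (L (rho_lam l1 l2 l3 l4)) =
    l1 * bell_fidelity k (L (Bell 1)) + l2 * bell_fidelity k (L (proj 4 (ket 1)))
    + l3 * bell_fidelity k (L (Bell 2)) + l4 * bell_fidelity k (L (proj 4 (ket 2)))"
  using assms by (simp add: rho_lam_def linear_map4_bell_fidelity_simps)

lemma non_entangling_bell_fidelity_separable: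
  "non_entangling L \<Longrightarrow> separable2 \<rho> \<Longrightarrow> 0 \<le> bell_fidelity k (L \<rho>) \<and> bell_fidelity k (L \<rho>) \<le> 1 / 2"
  unfolding non_entangling_def using separable2_bell_fidelity by blast

lemma non_entangling_Bell_1_2_bound:
  assumes "non_entangling L"
  shows "bell_fidelity 1 (L (Bell 1)) + bell_fidelity 1 (L (Bell 2)) \<le> 1"
  using non_entangling_bell_fidelity_separable[OF assms separable2_Bell_1_2_mixture, of 1] assms
  by (simp add: non_entangling_def linear_map4_bell_fidelity_simps)

lemma non_entangling_Bell_mixed_01_10_bound:
  assumes "non_entangling L" "k \<in> {1, 2}"
  shows "2 * bell_fidelity k (L (Bell k)) + bell_fidelity k (L (proj 4 (ket 1)))
    + bell_fidelity k (L (proj 4 (ket 2))) \<le> 2"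
  using non_entangling_bell_fidelity_separable[OF assms(1) separable2_Bell_mixed_01_10[OF assms(2)], of k] assms(1)
  by (simp add: non_entangling_def linear_map4_bell_fidelity_simps)

lemma bell1_balance_forces_fidelity_one:
  fixes l1 l2 l3 l4 x y u v :: real
  assumes "0 \<le> l3" "0 \<le> l4" "l4 \<le> l2" "2 * l2 + l3 < l1"
    and balance: "l1 = l1 * x + l2 * u + l3 * y + l4 * v"
    and "0 \<le> u" "0 \<le> v" "x + y \<le> 1" "2 * x + u + v \<le> 2"
  shows "1 \<le> x"
proof -
  have "l3 * y \<le> l3 * (1 - x)"
    using assms by (intro mult_left_mono) auto
  moreover have "l4 * v \<le> l2 * v"
    using assms by (intro mult_right_mono) auto
  moreover have "l2 * (u + v) \<le> l2 * (2 * (1 - x))"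
    using assms by (intro mult_left_mono) auto
  ultimately have "(l1 - 2 * l2 - l3) * (1 - x) \<le> 0"
    using balance by (simp add: algebra_simps)
  then show ?thesis
    using assms(4) by (simp add: mult_le_0_iff)
qed

lemma bell2_balance_infeasible:
  fixes l2 l3 l4 y u v :: real
  assumes "0 \<le> l3" "l3 + l4 < l2" "3 * l3 < 2 * l2"
    and balance: "l2 = l2 * u + l3 * y + l4 * v"
    and "0 \<le> u" "u \<le> 1 / 2" "0 \<le> v" "v \<le> 1 / 2" "2 * y + u + v \<le> 2"
  shows False
proof -
  have "y \<le> 1 - (u + v) / 2"
    using assms(9) by (simp add: field_simps)
  then have "l3 * y \<le> l3 * (1 - (u + v) / 2)"
    using assms by (intro mult_left_mono)
  then have y: "l3 * y \<le> l3 - l3 * u / 2 - l3 * v / 2"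
    by (simp add: algebra_simps add_divide_distrib)
  have "u * (l2 - l3 / 2) \<le> 1 / 2 * (l2 - l3 / 2)"
    using assms by (intro mult_right_mono) auto
  then have u: "l2 * u - l3 * u / 2 \<le> l2 / 2 - l3 / 4"
    by (simp add: algebra_simps)
  have "(1 - 2 * v) * (3 * l3 / 4) + 2 * v * ((l3 + l4) / 2) < l2 / 2"
    using assms by (intro convex_bound_lt) auto
  then have v: "3 * l3 / 4 - l3 * v / 2 + l4 * v < l2 / 2"
    by (simp add: field_simps)
  show False
    using balance y u v by linarith
qed

theorem theorem6:
  fixes l1 l2 l3 l4 :: real
  assumes "l1 \<ge> l2" "l2 \<ge> l3" "l3 \<ge> l4" "l4 \<ge> 0" "l1 + l2 + l3 + l4 = 1"
    and "(2*l2 + l3 - l1 < 0 \<and> 2*l3 + l4 - l2 < 0)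
       \<or> (2*l2 + l3 - l1 < 0 \<and> 2*l3 + l4 - l2 \<ge> 0 \<and> l3 \<le> 2*l4 \<and> l2 > l3 + l4)
       \<or> (2*l2 + l3 - l1 < 0 \<and> 2*l3 + l4 - l2 \<ge> 0 \<and> l3 > 2*l4 \<and> l2 > 3/2 * l3)"
  shows "\<not> (\<exists>\<Lambda>. non_entangling \<Lambda> \<and> \<Lambda> (rho_lam l1 l2 l3 l4) = sigma_lam l1 l2 l3 l4)"
proof
  assume "\<exists>\<Lambda>. non_entangling \<Lambda> \<and> \<Lambda> (rho_lam l1 l2 l3 l4) = sigma_lam l1 l2 l3 l4"
  then obtain L where L: "non_entangling L" and L_rho: "L (rho_lam l1 l2 l3 l4) = sigma_lam l1 l2 l3 l4"
    by blast
  have region: "2 * l2 + l3 < l1" "l3 + l4 < l2" "3 * l3 < 2 * l2"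
    using assms(3,4,6) by auto
  have balance: "bell_fidelity k (sigma_lam l1 l2 l3 l4) =
      l1 * bell_fidelity k (L (Bell 1)) + l2 * bell_fidelity k (L (proj 4 (ket 1)))
      + l3 * bell_fidelity k (L (Bell 2)) + l4 * bell_fidelity k (L (proj 4 (ket 2)))" for k
    unfolding L_rho[symmetric] using L by (simp add: non_entangling_def bell_fidelity_image_rho_lam)
  have Bell1_image: "density2 (L (Bell 1))"
    using L density2_Bell[of 1] by (simp add: non_entangling_def)
  note P01_image = non_entangling_bell_fidelity_separable[OF L separable2_proj_ket[of 1]]
  note P10_image = non_entangling_bell_fidelity_separable[OF L separable2_proj_ket[of 2]]
  have "1 \<le> bell_fidelity 1 (L (Bell 1))"
    by (rule bell1_balance_forces_fidelity_one[OF _ _ _ _ balance[of 1, unfolded bell_fidelity_sigma_lam]])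
      (use assms region P01_image P10_image non_entangling_Bell_1_2_bound[OF L]
        non_entangling_Bell_mixed_01_10_bound[OF L, of 1] in auto)
  then have "bell_fidelity 2 (L (Bell 1)) = 0"
    using density2_bell_fidelity_nonneg[OF Bell1_image, of 2] density2_bell_fidelity_12_le[OF Bell1_image]
    by linarith
  then show False
    using balance[of 2, unfolded bell_fidelity_sigma_lam]
    by (intro bell2_balance_infeasible[of l3 l4 l2]) (use assms region P01_image P10_image
        non_entangling_Bell_mixed_01_10_bound[OF L, of 2] in auto)
qed

end
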